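(* $conv\leq_{K}\mathcal{S}pl$.
   Context: $conv$ is the ideal on $\mathbb{Q}\cap[0,1]$ generated by sequences in $\mathbb{Q}\cap[0,1]$ converging in $[0,1]$. For an infinite $A\subseteq\omega$, let $S(A)$ be the set of all $\sigma\in2^{<\omega}$ such that $\sigma$ is constant on $A\cap\mathrm{dom}(\sigma)$. The splitting ideal $\mathcal{S}pl$ is the ideal on $2^{<\omega}$ generated by the sets $S(A)$, $A\in[\omega]^{\omega}$. For ideals $\mathcal{J}_0,\mathcal{J}_1$ on countable sets $X_0,X_1$, $\mathcal{J}_{0}\leq_{K}\mathcal{J}_{1}$ means there is a function $\pi:X_1\rightarrow X_0$ with $\pi^{-1}[A]\in\mathcal{J}_{1}$ for every $A\in\mathcal{J}_{0}$. *)

theory Defs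
  imports Complex_Main
begin

definition generated_ideal :: "'a set \<Rightarrow> 'a set set \<Rightarrow> 'a set set" where
  "generated_ideal X G = {B. B \<subseteq> X \<and> (\<exists>F. finite F \<and> F \<subseteq> G \<and> B \<subseteq> \<Union>F)}"

definition katetov_le :: "'a set \<Rightarrow> 'a set set \<Rightarrow> 'b set \<Rightarrow> 'b set set \<Rightarrow> bool" where
  "katetov_le X0 J0 X1 J1 \<longleftrightarrow>
     (\<exists>\<pi> :: 'b \<Rightarrow> 'a. (\<forall>x\<in>X1. \<pi> x \<in> X0) \<and> (\<forall>A\<in>J0. {x\<in>X1. \<pi> x \<in> A} \<in> J1))"

definition Q01 :: "real set" where
  "Q01 = {x. x \<in> \<rat> \<and> 0 \<le> x \<and> x \<le> 1}"

definition conv :: "real set set" where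
  "conv = generated_ideal Q01
     {range f | f. (\<forall>n. f n \<in> Q01) \<and> (\<exists>L. 0 \<le> L \<and> L \<le> 1 \<and> f \<longlonglongrightarrow> L)}"

text \<open>2^{<omega} as bool lists; dom sigma = {..<length sigma}.\<close>
definition S_set :: "nat set \<Rightarrow> bool list set" where
  "S_set A = {\<sigma>. \<forall>i\<in>A. \<forall>j\<in>A. i < length \<sigma> \<longrightarrow> j < length \<sigma> \<longrightarrow> \<sigma> ! i = \<sigma> ! j}"

definition Spl :: "bool list set set" where
  "Spl = generated_ideal UNIV {S_set A | A. infinite A}"

end

theory Submission
  imports Defs "HOL-Library.Infinite_Set"
begin

text \<open>
  Read a binary string as a ternary expansion with digits 0 and 2, the empty string coding 1/2.
  This codes strings injectively into \<open>\<rat> \<inter> (0,1)\<close>, and strings that differ among their first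
  k bits get codes at least \<open>1/(6 * 3^k)\<close> apart. Hence the strings whose codes lie on a convergent
  sequence all but finitely often extend any given initial segment of a single branch x.
  Choose positions \<open>T 0 < T 1 < \<dots>\<close> at which x takes the same value c, so sparse that a string
  deviating from x up to position \<open>T j\<close> is shorter than \<open>T (j+1)\<close>. Such a string differs from c
  at no more than one position \<open>T j\<close>, so it is constant on the even or on the odd positions of T.
  The preimage of a convergent sequence is therefore covered by two generators of \<open>Spl\<close>.
\<close>

lemma generated_ideal_subset:
  assumes "B \<in> generated_ideal X G" and "C \<subseteq> B"
  shows "C \<in> generated_ideal X G"
  using assms unfolding generated_ideal_def by (auto 0 3)

lemma generated_ideal_Union:
  assumes "finite \<B>" and "\<B> \<subseteq> generated_ideal X G"
  shows "\<Union>\<B> \<in> generated_ideal X G"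
proof -
  have "\<forall>B\<in>\<B>. \<exists>F. finite F \<and> F \<subseteq> G \<and> B \<subseteq> \<Union>F"
    using assms(2) unfolding generated_ideal_def by blast
  then obtain F where F: "\<forall>B\<in>\<B>. finite (F B) \<and> F B \<subseteq> G \<and> B \<subseteq> \<Union>(F B)"
    by metis
  have "finite (\<Union>(F ` \<B>))"
    using assms(1) F by simp
  moreover have "\<Union>(F ` \<B>) \<subseteq> G"
    using F by blast
  moreover have "\<Union>\<B> \<subseteq> \<Union>(\<Union>(F ` \<B>))"
    using F by fastforce
  moreover have "\<Union>\<B> \<subseteq> X"
    using assms(2) by (auto simp: generated_ideal_def)
  ultimately show ?thesis
    unfolding generated_ideal_def by (intro CollectI conjI exI[of _ "\<Union>(F ` \<B>)"])
qed

lemma katetov_le_generated_ideal: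
  assumes into: "\<forall>x\<in>X1. \<pi> x \<in> X0"
    and generators: "\<And>g. g \<in> G0 \<Longrightarrow> {x\<in>X1. \<pi> x \<in> g} \<in> generated_ideal X1 G1"
  shows "katetov_le X0 (generated_ideal X0 G0) X1 (generated_ideal X1 G1)"
  unfolding katetov_le_def
proof (intro exI[of _ \<pi>] conjI into ballI)
  fix A assume "A \<in> generated_ideal X0 G0"
  then obtain F where F: "finite F" "F \<subseteq> G0" "A \<subseteq> \<Union>F"
    unfolding generated_ideal_def by blast
  have "\<Union>((\<lambda>g. {x\<in>X1. \<pi> x \<in> g}) ` F) \<in> generated_ideal X1 G1"
    using F(1,2) generators by (intro generated_ideal_Union) auto
  moreover have "{x\<in>X1. \<pi> x \<in> A} \<subseteq> \<Union>((\<lambda>g. {x\<in>X1. \<pi> x \<in> g}) ` F)"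
    using F(3) by blast
  ultimately show "{x\<in>X1. \<pi> x \<in> A} \<in> generated_ideal X1 G1"
    by (rule generated_ideal_subset)
qed

fun ternary_code :: "bool list \<Rightarrow> real" where
  "ternary_code [] = 1/2"
| "ternary_code (b # s) = (if b then 2/3 else 0) + ternary_code s / 3"

lemma ternary_code_bounds: "0 < ternary_code s \<and> ternary_code s < 1"
  by (induction s) auto

lemma ternary_code_in_Q01: "ternary_code s \<in> Q01"
proof -
  have "ternary_code s \<in> \<rat>"
    by (induction s) auto
  then show ?thesis
    using ternary_code_bounds[of s] unfolding Q01_def by auto
qed

lemma ternary_code_separated:
  "take k s \<noteq> take k t \<Longrightarrow> 1 / (6 * 3 ^ k) < \<bar>ternary_code s - ternary_code t\<bar>"
proof (induction k arbitrary: s t)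
  case 0
  then show ?case by simp
next
  case (Suc k)
  show ?case
  proof (cases "\<exists>b s' t'. s = b # s' \<and> t = b # t'")
    case True
    then obtain b s' t' where st: "s = b # s'" "t = b # t'"
      by blast
    with Suc.prems have "1 / (6 * 3 ^ k) < \<bar>ternary_code s' - ternary_code t'\<bar>"
      by (intro Suc.IH) simp
    moreover have "\<bar>ternary_code s - ternary_code t\<bar> = \<bar>ternary_code s' - ternary_code t'\<bar> / 3"
      using st by (simp flip: diff_divide_distrib)
    ultimately show ?thesis
      by simp
  next
    case False
    \<comment> \<open>the codes lie in different outer thirds of (0,1), or one is 1/2 and the other in an outer third\<close>
    with Suc.prems have "1/6 < \<bar>ternary_code s - ternary_code t\<bar>"
      using ternary_code_bounds[of "tl s"] ternary_code_bounds[of "tl t"]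
      by (cases s; cases t) auto
    moreover have "1 / (6 * 3 ^ Suc k) \<le> (1/6 :: real)"
      using one_le_power[of "3::real" "Suc k"] by (simp add: field_simps)
    ultimately show ?thesis
      by linarith
  qed
qed

lemma inj_ternary_code: "inj ternary_code"
proof (rule injI, rule ccontr)
  fix s t assume "ternary_code s = ternary_code t" and "s \<noteq> t"
  then show False
    using ternary_code_separated[of "max (length s) (length t)" s t] by simp
qed

definition prefix_Cauchy :: "bool list set \<Rightarrow> bool" where
  "prefix_Cauchy Y \<longleftrightarrow>
     (\<forall>k. \<exists>F. finite F \<and> (\<forall>s\<in>Y - F. \<forall>t\<in>Y - F. k \<le> length s \<and> take k s = take k t))"

lemma finite_bool_lists_shorter: "finite {s :: bool list. length s < k}"
  by (rule rev_finite_subset[OF finite_lists_length_le[of UNIV k]]) auto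

lemma prefix_Cauchy_ternary_code_vimage:
  assumes "Cauchy f"
  shows "prefix_Cauchy (ternary_code -` range f)"
  unfolding prefix_Cauchy_def
proof
  fix k
  obtain M where M: "\<forall>m\<ge>M. \<forall>n\<ge>M. norm (f m - f n) < 1 / (6 * 3 ^ k)"
    using CauchyD[OF assms, of "1 / (6 * 3 ^ k)"] by auto
  define F where "F = ternary_code -` f ` {..<M} \<union> {s. length s < k}"
  have "finite F"
    unfolding F_def using finite_bool_lists_shorter
    by (simp add: finite_vimageI inj_ternary_code)
  moreover have "k \<le> length s \<and> take k s = take k t"
    if s: "s \<in> ternary_code -` range f - F" and t: "t \<in> ternary_code -` range f - F" for s t
  proof
    show "k \<le> length s"
      using s unfolding F_def by simp
    obtain m n where "ternary_code s = f m" "ternary_code t = f n" "M \<le> m" "M \<le> n"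
      using s t unfolding F_def by (force simp: not_less)
    then have "\<bar>ternary_code s - ternary_code t\<bar> < 1 / (6 * 3 ^ k)"
      using M by auto
    then show "take k s = take k t"
      using ternary_code_separated by force
  qed
  ultimately show "\<exists>F. finite F \<and> (\<forall>s\<in>ternary_code -` range f - F. \<forall>t\<in>ternary_code -` range f - F.
      k \<le> length s \<and> take k s = take k t)"
    by blast
qed

definition converges_to_branch :: "bool list set \<Rightarrow> (nat \<Rightarrow> bool) \<Rightarrow> bool" where
  "converges_to_branch Y x \<longleftrightarrow> (\<forall>k. finite {s\<in>Y. length s < k \<or> (\<exists>i<k. s ! i \<noteq> x i)})"

lemma prefix_Cauchy_converges_to_branch:
  assumes "prefix_Cauchy Y"
  obtains x where "converges_to_branch Y x"
proof (cases "finite Y")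
  case True
  then have "converges_to_branch Y x" for x
    unfolding converges_to_branch_def by simp
  then show ?thesis
    using that by blast
next
  case False
  obtain F where F: "\<And>k. finite (F k)"
    and close: "\<And>k s t. s \<in> Y - F k \<Longrightarrow> t \<in> Y - F k \<Longrightarrow> k \<le> length s \<and> take k s = take k t"
    using assms unfolding prefix_Cauchy_def by metis
  define w where "w k = (SOME s. s \<in> Y - F k)" for k
  have w: "w k \<in> Y - F k" for k
  proof -
    have "infinite (Y - F k)"
      using False F by (simp add: Diff_infinite_finite)
    then have "\<exists>s. s \<in> Y - F k"
      by (metis ex_in_conv finite.emptyI)
    then show ?thesis
      unfolding w_def by (rule someI_ex)
  qed
  define x where "x i = w (Suc i) ! i" for i
  have nth_eq: "s ! i = x i" if "s \<in> Y - F (Suc i)" for s i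
    using close[OF that w] close[OF w that] unfolding x_def by (metis lessI nth_take)
  have "{s\<in>Y. length s < k \<or> (\<exists>i<k. s ! i \<noteq> x i)} \<subseteq> F k \<union> (\<Union>i<k. F (Suc i))" for k
    using close nth_eq by (force simp: not_le)
  then have "converges_to_branch Y x"
    unfolding converges_to_branch_def using F by (meson finite_UN_I finite_Un finite_lessThan rev_finite_subset)
  then show ?thesis
    using that by blast
qed

lemma infinite_nat_sparse_sequence:
  fixes Z :: "nat set"
  assumes "infinite Z"
  obtains T where "strict_mono T" "range T \<subseteq> Z" "\<And>j. B (T j) < T (Suc j)"
proof -
  have "\<exists>z. z \<in> Z"
    using assms by (metis ex_in_conv finite.emptyI)
  moreover have "\<exists>z'. z' \<in> Z \<and> z < z' \<and> B z < z'" for z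
  proof -
    obtain z' where "max z (B z) < z'" "z' \<in> Z"
      using assms unfolding infinite_nat_iff_unbounded by blast
    then show ?thesis
      by auto
  qed
  ultimately obtain T where "\<forall>j. T j \<in> Z \<and> T j < T (Suc j) \<and> B (T j) < T (Suc j)"
    using dependent_nat_choice[of "\<lambda>_ z. z \<in> Z" "\<lambda>_ z z'. z < z' \<and> B z < z'"] by blast
  then show ?thesis
    using that by (auto simp: strict_mono_Suc_iff)
qed

lemma infinite_parity_class: "infinite {j :: nat. even j = b}"
  unfolding infinite_nat_iff_unbounded
proof
  fix m :: nat
  show "\<exists>n>m. n \<in> {j. even j = b}"
    by (rule exI[of _ "2 * m + (if b then 2 else 1)"]) simp
qed

lemma S_setI: "(\<And>i. i \<in> A \<Longrightarrow> i < length s \<Longrightarrow> s ! i = c) \<Longrightarrow> s \<in> S_set A"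
  unfolding S_set_def by simp

lemma S_set_even_or_odd_positions:
  assumes "strict_mono T"
    and short: "\<And>j. T j < length s \<Longrightarrow> s ! T j \<noteq> c \<Longrightarrow> length s < T (Suc j)"
  obtains b where "s \<in> S_set (T ` {j. even j = b})"
proof (cases "\<exists>j. T j < length s \<and> s ! T j \<noteq> c")
  case False
  then have "s \<in> S_set (T ` {j. even j = True})"
    by (intro S_setI[where c = c]) auto
  then show ?thesis
    by (rule that)
next
  case True
  define j0 where "j0 = (LEAST j. T j < length s \<and> s ! T j \<noteq> c)"
  have j0: "T j0 < length s" "s ! T j0 \<noteq> c"
    using LeastI_ex[OF True] unfolding j0_def by auto
  have agrees: "s ! T j = c" if "j \<noteq> j0" and "T j < length s" for j
  proof (cases "j < j0")
    case True
    then show ?thesis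
      using not_less_Least[of j "\<lambda>j. T j < length s \<and> s ! T j \<noteq> c"] that
      unfolding j0_def by blast
  next
    case False
    with that have "T (Suc j0) \<le> T j"
      using strict_mono_less_eq[OF assms(1)] by simp
    with that short[OF j0] show ?thesis
      by simp
  qed
  have "s \<in> S_set (T ` {j. even j = (\<not> even j0)})"
  proof (rule S_setI[where c = c])
    fix i assume "i \<in> T ` {j. even j = (\<not> even j0)}" and "i < length s"
    then obtain j where "i = T j" and "j \<noteq> j0"
      by auto
    with agrees \<open>i < length s\<close> show "s ! i = c"
      by blast
  qed
  then show ?thesis
    by (rule that)
qed

lemma converges_to_branch_in_Spl:
  assumes "converges_to_branch Y x"
  shows "Y \<in> Spl"
proof -
  obtain c where "infinite (x -` {c})"
    using inf_img_fin_domE[of x UNIV] by auto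
  define deviating where "deviating k = {s\<in>Y. length s < k \<or> (\<exists>i<k. s ! i \<noteq> x i)}" for k
  have finite_deviating: "finite (deviating k)" for k
    using assms unfolding converges_to_branch_def deviating_def by blast
  obtain T where T: "strict_mono T" "range T \<subseteq> x -` {c}"
    and sparse: "\<And>j. Max (length ` deviating (Suc (T j))) < T (Suc j)"
    using infinite_nat_sparse_sequence[OF \<open>infinite (x -` {c})\<close>,
        of "\<lambda>t. Max (length ` deviating (Suc t))"]
    by blast
  define A where "A b = T ` {j. even j = b}" for b
  have "Y \<subseteq> S_set (A True) \<union> S_set (A False)"
  proof
    fix s assume "s \<in> Y"
    have "length s < T (Suc j)" if "T j < length s" and "s ! T j \<noteq> c" for j
    proof -
      have "x (T j) = c"
        using T(2) by auto
      with \<open>s \<in> Y\<close> that have "s \<in> deviating (Suc (T j))"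
        unfolding deviating_def by auto
      then have "length s \<le> Max (length ` deviating (Suc (T j)))"
        using finite_deviating by (intro Max_ge) auto
      then show ?thesis
        using sparse[of j] by linarith
    qed
    with T(1) obtain b where "s \<in> S_set (A b)"
      unfolding A_def by (rule S_set_even_or_odd_positions)
    then show "s \<in> S_set (A True) \<union> S_set (A False)"
      by (cases b) auto
  qed
  moreover have "infinite (A b)" for b
    unfolding A_def using infinite_parity_class T(1)
    by (metis finite_imageD strict_mono_imp_inj_on)
  then have "{S_set (A True), S_set (A False)} \<subseteq> {S_set A | A. infinite A}"
    by blast
  ultimately show "Y \<in> Spl"
    unfolding Spl_def generated_ideal_def
    by (intro CollectI conjI exI[of _ "{S_set (A True), S_set (A False)}"]) auto
qed

theorem mainTheorem7:
  shows "katetov_le Q01 conv (UNIV :: bool list set) Spl"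
  unfolding conv_def Spl_def
proof (rule katetov_le_generated_ideal[where \<pi> = ternary_code])
  show "\<forall>s\<in>UNIV. ternary_code s \<in> Q01"
    by (simp add: ternary_code_in_Q01)
next
  fix g assume "g \<in> {range f | f. (\<forall>n. f n \<in> Q01) \<and> (\<exists>L. 0 \<le> L \<and> L \<le> 1 \<and> f \<longlonglongrightarrow> L)}"
  then obtain f L where "g = range f" and "f \<longlonglongrightarrow> L"
    by blast
  then have "prefix_Cauchy (ternary_code -` g)"
    using prefix_Cauchy_ternary_code_vimage LIMSEQ_imp_Cauchy by blast
  then obtain x where "converges_to_branch (ternary_code -` g) x"
    by (rule prefix_Cauchy_converges_to_branch)
  then have "ternary_code -` g \<in> Spl"
    by (rule converges_to_branch_in_Spl)
  then show "{s\<in>UNIV. ternary_code s \<in> g} \<in> generated_ideal UNIV {S_set A | A. infinite A}"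
    by (simp add: Spl_def vimage_def)
qed

end
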